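(* Let $D$ be a finite domain and let $\mathcal F$ be a family of functions of the form $f:D^L\to D$ (with $L$ ranging over positive integers). Then there exists a finite family $\Gamma$ of promise relations over $D$ such that $\mathcal F=\operatorname{poly}(\Gamma)$ if and only if $\mathcal F$ is projection-closed, finitizable, and contains the identity function $\operatorname{id}_D:D\to D$, $\operatorname{id}_D(x)=x$.
   Context: A promise relation over $D$ is a pair $(P,Q)$ with $P\subseteq Q\subseteq D^k$. $f:D^L\to D$ is a weak polymorphism of $(P,Q)$ if for all $x^{(1)},\dots,x^{(L)}\in P$, $(f(x^{(1)}_1,\dots,x^{(L)}_1),\dots,f(x^{(1)}_k,\dots,x^{(L)}_k))\in Q$; $\operatorname{poly}(\Gamma)$ is the set of functions that are weak polymorphisms of every member of $\Gamma$. For $f:D^L\to D$ and any map $\pi:[L]\to[R]$, the projection $f^\pi:D^R\to D$ is defined by $f^\pi(y)=f(x)$ where $x_i=y_{\pi(i)}$ for all $i\in[L]$. $\mathcal F$ is projection-closed if $f^\pi\in\mathcal F$ for all $f\in\mathcal F$ of arity $L$, all $R$, and all $\pi:[L]\to[R]$. $\mathcal F$ is finitizable if there exists $R\in\mathbb N$ such that for every $L$ and every $f:D^L\to D$, $f\in\mathcal F$ if and only if $f^\pi\in\mathcal F$ for all $\pi:[L]\to[R]$. *)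

theory Defs
  imports "HOL-Library.FuncSet"
begin

text \<open>The finite domain D is a type 'd of class finite. Tuples in D^n are extensional
functions on the 0-based index set {0..<n}; an L-ary function D^L \<rightarrow> D is a pair (L, f) with
L > 0 and f an extensional function on D^L (so equal functions have equal representations).\<close>

definition tuples :: "nat \<Rightarrow> (nat \<Rightarrow> 'd) set" where
  "tuples n = PiE {0..<n} (\<lambda>_. UNIV)"

definition is_fun :: "nat \<Rightarrow> ((nat \<Rightarrow> 'd) \<Rightarrow> 'd) \<Rightarrow> bool" where
  "is_fun L f \<longleftrightarrow> L > 0 \<and> f \<in> extensional (tuples L)"

definition promise_rel :: "nat \<times> (nat \<Rightarrow> 'd) set \<times> (nat \<Rightarrow> 'd) set \<Rightarrow> bool" where
  "promise_rel R \<longleftrightarrow> (case R of (k, P, Q) \<Rightarrow> P \<subseteq> Q \<and> Q \<subseteq> tuples k)"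

definition weak_poly ::
  "nat \<Rightarrow> ((nat \<Rightarrow> 'd) \<Rightarrow> 'd) \<Rightarrow> nat \<times> (nat \<Rightarrow> 'd) set \<times> (nat \<Rightarrow> 'd) set \<Rightarrow> bool" where
  "weak_poly L f R \<longleftrightarrow> (case R of (k, P, Q) \<Rightarrow>
     (\<forall>X. (\<forall>i<L. X i \<in> P) \<longrightarrow>
        (\<lambda>j\<in>{0..<k}. f (\<lambda>i\<in>{0..<L}. X i j)) \<in> Q))"

definition poly :: "(nat \<times> (nat \<Rightarrow> 'd) set \<times> (nat \<Rightarrow> 'd) set) set
    \<Rightarrow> (nat \<times> ((nat \<Rightarrow> 'd) \<Rightarrow> 'd)) set" where
  "poly \<Gamma> = {(L, f). is_fun L f \<and> (\<forall>R\<in>\<Gamma>. weak_poly L f R)}"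

definition proj :: "nat \<Rightarrow> ((nat \<Rightarrow> 'd) \<Rightarrow> 'd) \<Rightarrow> (nat \<Rightarrow> nat) \<Rightarrow> nat \<Rightarrow> ((nat \<Rightarrow> 'd) \<Rightarrow> 'd)" where
  "proj L f \<pi> R = (\<lambda>y\<in>tuples R. f (\<lambda>i\<in>{0..<L}. y (\<pi> i)))"

definition projection_closed :: "(nat \<times> ((nat \<Rightarrow> 'd) \<Rightarrow> 'd)) set \<Rightarrow> bool" where
  "projection_closed F \<longleftrightarrow>
     (\<forall>(L, f)\<in>F. \<forall>R \<pi>. \<pi> \<in> {0..<L} \<rightarrow> {0..<R} \<longrightarrow> (R, proj L f \<pi> R) \<in> F)"

definition finitizable :: "(nat \<times> ((nat \<Rightarrow> 'd) \<Rightarrow> 'd)) set \<Rightarrow> bool" where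
  "finitizable F \<longleftrightarrow> (\<exists>R::nat. \<forall>L f. is_fun L f \<longrightarrow>
     ((L, f) \<in> F \<longleftrightarrow> (\<forall>\<pi> \<in> {0..<L} \<rightarrow> {0..<R}. (R, proj L f \<pi> R) \<in> F)))"

definition id_fun :: "(nat \<Rightarrow> 'd) \<Rightarrow> 'd" where
  "id_fun = (\<lambda>x\<in>tuples 1. x 0)"

end

theory Submission
  imports Defs
begin

text \<open>Necessity: weak polymorphisms are closed under projections, and if every P in \<Gamma> has at
most R elements, the L columns fed to an L-ary function take at most R distinct values, so the
function acts on them as one of its R-ary projections does. Sufficiency: for a finitizing arity R
take one relation whose coordinates are indexed by D^R, with P the R coordinate projections and
Q the value tables of the R-ary members of F. Applying f to columns from P evaluates one of its
R-ary projections, so f is a weak polymorphism exactly when all of these lie in F.\<close>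

lemma restrict_in_tuples [simp]: "(\<lambda>i\<in>{0..<n}. x i) \<in> tuples n"
  by (simp add: tuples_def)

lemma finite_tuples: "finite (tuples n :: (nat \<Rightarrow> 'd::finite) set)"
  by (simp add: tuples_def finite_PiE)

lemma id_fun_restrict: "id_fun (\<lambda>i\<in>{0..<1}. x i) = x 0"
  unfolding id_fun_def by (simp only: restrict_apply'[OF restrict_in_tuples]) simp

lemma proj_restrict:
  assumes "\<pi> \<in> {0..<L} \<rightarrow> {0..<R}"
  shows "proj L f \<pi> R (\<lambda>i\<in>{0..<R}. y i) = f (\<lambda>i\<in>{0..<L}. y (\<pi> i))"
proof -
  have "(\<lambda>i\<in>{0..<L}. (\<lambda>i\<in>{0..<R}. y i) (\<pi> i)) = (\<lambda>i\<in>{0..<L}. y (\<pi> i))"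
    using assms by (intro restrict_ext) auto
  then show ?thesis
    by (simp add: proj_def)
qed

lemma is_fun_proj:
  assumes "L > 0" "\<pi> \<in> {0..<L} \<rightarrow> {0..<R}"
  shows "is_fun R (proj L f \<pi> R)"
proof -
  have "\<pi> 0 < R"
    using assms by auto
  then show ?thesis
    by (simp add: is_fun_def proj_def)
qed

lemma map_into_finite_set_factors:
  assumes "finite P" "card P \<le> R" "P \<noteq> {}" "\<forall>i<L. X i \<in> P"
  obtains \<pi> Y where "\<pi> \<in> {0..<L} \<rightarrow> {0..<R}" "\<forall>i<R. Y i \<in> P" "\<forall>i<L. X i = Y (\<pi> i)"
proof -
  obtain e where e: "bij_betw e {0..<card P} P"
    using ex_bij_betw_nat_finite[OF assms(1)] by blast
  then have e_onto: "e ` {0..<card P} = P"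
    by (simp add: bij_betw_def)
  define \<pi> where "\<pi> i = inv_into {0..<card P} e (X i)" for i
  define Y where "Y j = (if j < card P then e j else SOME p. p \<in> P)" for j
  have \<pi>_less: "\<pi> i < card P" if "i < L" for i
    using inv_into_into[of "X i" e "{0..<card P}"] assms(4) that e_onto
    by (simp add: \<pi>_def)
  show ?thesis
  proof
    show "\<pi> \<in> {0..<L} \<rightarrow> {0..<R}"
      using \<pi>_less assms(2) by fastforce
    show "\<forall>i<R. Y i \<in> P"
      using e_onto assms(3) by (auto simp: Y_def intro: someI_ex)
    show "\<forall>i<L. X i = Y (\<pi> i)"
      using \<pi>_less assms(4) e by (simp add: Y_def \<pi>_def bij_betw_inv_into_right)
  qed
qed

lemma weak_poly_proj:
  assumes "weak_poly L f r" "\<pi> \<in> {0..<L} \<rightarrow> {0..<R}"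
  shows "weak_poly R (proj L f \<pi> R) r"
proof -
  obtain k P Q where r: "r = (k, P, Q)"
    by (cases r) blast
  show ?thesis
    unfolding r weak_poly_def prod.case
  proof (intro allI impI)
    fix X assume "\<forall>i<R. X i \<in> P"
    then have "\<forall>i<L. X (\<pi> i) \<in> P"
      using assms(2) by (auto simp: Pi_iff)
    then have "(\<lambda>j\<in>{0..<k}. f (\<lambda>i\<in>{0..<L}. X (\<pi> i) j)) \<in> Q"
      using assms(1) spec[of _ "\<lambda>i. X (\<pi> i)"] by (simp add: r weak_poly_def)
    then show "(\<lambda>j\<in>{0..<k}. proj L f \<pi> R (\<lambda>i\<in>{0..<R}. X i j)) \<in> Q"
      using assms(2) by (simp add: proj_restrict)
  qed
qed

lemma weak_poly_if_proj_weak_poly: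
  assumes "finite P" "card P \<le> R" "L > 0"
    and proj_poly: "\<forall>\<pi>\<in>{0..<L} \<rightarrow> {0..<R}. weak_poly R (proj L f \<pi> R) (k, P, Q)"
  shows "weak_poly L f (k, P, Q)"
  unfolding weak_poly_def prod.case
proof (intro allI impI)
  fix X assume X: "\<forall>i<L. X i \<in> P"
  then have "P \<noteq> {}"
    using \<open>L > 0\<close> by blast
  then obtain \<pi> Y where \<pi>: "\<pi> \<in> {0..<L} \<rightarrow> {0..<R}"
    and Y: "\<forall>i<R. Y i \<in> P" and XY: "\<forall>i<L. X i = Y (\<pi> i)"
    using map_into_finite_set_factors[OF assms(1,2) _ X] by blast
  have "(\<lambda>j\<in>{0..<k}. proj L f \<pi> R (\<lambda>i\<in>{0..<R}. Y i j)) \<in> Q"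
    using proj_poly \<pi> Y spec[of _ Y] by (simp add: weak_poly_def)
  moreover have "(\<lambda>i\<in>{0..<L}. Y (\<pi> i) j) = (\<lambda>i\<in>{0..<L}. X i j)" for j
    using XY by (intro restrict_ext) simp
  ultimately show "(\<lambda>j\<in>{0..<k}. f (\<lambda>i\<in>{0..<L}. X i j)) \<in> Q"
    using \<pi> by (simp add: proj_restrict)
qed

lemma poly_proj:
  assumes "(L, f) \<in> poly \<Gamma>" "\<pi> \<in> {0..<L} \<rightarrow> {0..<R}"
  shows "(R, proj L f \<pi> R) \<in> poly \<Gamma>"
proof -
  have "weak_poly R (proj L f \<pi> R) r" if "r \<in> \<Gamma>" for r
  proof -
    have "weak_poly L f r"
      using assms(1) that by (simp add: poly_def)
    then show ?thesis
      using assms(2) by (rule weak_poly_proj)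
  qed
  moreover have "is_fun R (proj L f \<pi> R)"
    using assms by (intro is_fun_proj) (auto simp: poly_def is_fun_def)
  ultimately show ?thesis
    by (simp add: poly_def)
qed

lemma projection_closed_poly: "projection_closed (poly \<Gamma>)"
  unfolding projection_closed_def by (auto intro: poly_proj)

lemma id_fun_in_poly:
  assumes "\<forall>r\<in>\<Gamma>. promise_rel r"
  shows "(1, id_fun) \<in> poly \<Gamma>"
proof -
  have "weak_poly 1 id_fun (k, P, Q)" if "(k, P, Q) \<in> \<Gamma>" for k P Q
  proof -
    have PQ: "P \<subseteq> Q" "Q \<subseteq> tuples k"
      using bspec[OF assms that] by (auto simp: promise_rel_def)
    show ?thesis
      unfolding weak_poly_def prod.case
    proof (intro allI impI)
      fix X assume "\<forall>i<(1::nat). X i \<in> P"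
      then have "X 0 \<in> Q" "X 0 \<in> tuples k"
        using PQ by auto
      then show "(\<lambda>j\<in>{0..<k}. id_fun (\<lambda>i\<in>{0..<1}. X i j)) \<in> Q"
        by (simp only: id_fun_restrict) (simp add: tuples_def PiE_restrict)
    qed
  qed
  then show ?thesis
    by (force simp: poly_def is_fun_def id_fun_def)
qed

lemma finitizable_poly:
  fixes \<Gamma> :: "(nat \<times> (nat \<Rightarrow> 'd::finite) set \<times> (nat \<Rightarrow> 'd) set) set"
  assumes "finite \<Gamma>" "\<forall>r\<in>\<Gamma>. promise_rel r"
  shows "finitizable (poly \<Gamma>)"
proof -
  define R where "R = (\<Sum>r\<in>\<Gamma>. card (fst (snd r)))"
  have small: "finite P \<and> card P \<le> R" if "(k, P, Q) \<in> \<Gamma>" for k P Q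
  proof
    have "P \<subseteq> tuples k"
      using bspec[OF assms(2) that] by (auto simp: promise_rel_def)
    then show "finite P"
      using finite_tuples finite_subset by blast
    show "card P \<le> R"
      using member_le_sum[OF that, of "\<lambda>r. card (fst (snd r))"] assms(1) by (simp add: R_def)
  qed
  have "(L, f) \<in> poly \<Gamma> \<longleftrightarrow> (\<forall>\<pi>\<in>{0..<L} \<rightarrow> {0..<R}. (R, proj L f \<pi> R) \<in> poly \<Gamma>)"
    if "is_fun L f" for L f
  proof
    assume "\<forall>\<pi>\<in>{0..<L} \<rightarrow> {0..<R}. (R, proj L f \<pi> R) \<in> poly \<Gamma>"
    then have "weak_poly L f (k, P, Q)" if "(k, P, Q) \<in> \<Gamma>" for k P Q
      using small[OF that] \<open>is_fun L f\<close> that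
      by (intro weak_poly_if_proj_weak_poly) (auto simp: poly_def is_fun_def)
    then show "(L, f) \<in> poly \<Gamma>"
      using \<open>is_fun L f\<close> by (auto simp: poly_def)
  qed (use poly_proj in blast)
  then show ?thesis
    unfolding finitizable_def by blast
qed

text \<open>The coordinates of D^k are indexed by D^R through enc, so that a k-tuple is the value
table of a function D^R \<rightarrow> D.\<close>

locale tuple_enumeration =
  fixes R k :: nat and enc :: "nat \<Rightarrow> nat \<Rightarrow> 'd"
  assumes enc_bij: "bij_betw enc {0..<k} (tuples R)"
begin

definition coord :: "nat \<Rightarrow> nat \<Rightarrow> 'd" where
  "coord i = (\<lambda>j\<in>{0..<k}. enc j i)"

definition table :: "((nat \<Rightarrow> 'd) \<Rightarrow> 'd) \<Rightarrow> nat \<Rightarrow> 'd" where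
  "table g = (\<lambda>j\<in>{0..<k}. g (enc j))"

definition free_relation ::
  "(nat \<times> ((nat \<Rightarrow> 'd) \<Rightarrow> 'd)) set \<Rightarrow> nat \<times> (nat \<Rightarrow> 'd) set \<times> (nat \<Rightarrow> 'd) set" where
  "free_relation F = (k, coord ` {0..<R}, table ` {g. (R, g) \<in> F})"

lemma enc_in_tuples: "j < k \<Longrightarrow> enc j \<in> tuples R"
  using enc_bij by (auto simp: bij_betw_def)

lemma apply_coords_eq_table:
  "(\<lambda>j\<in>{0..<k}. f (\<lambda>i\<in>{0..<L}. coord (\<pi> i) j)) = table (proj L f \<pi> R)"
  unfolding table_def
proof (rule restrict_ext)
  fix j assume "j \<in> {0..<k}"
  then show "f (\<lambda>i\<in>{0..<L}. coord (\<pi> i) j) = proj L f \<pi> R (enc j)"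
    using enc_in_tuples[of j] by (simp add: coord_def proj_def)
qed

lemma table_inj:
  assumes "g \<in> extensional (tuples R)" "g' \<in> extensional (tuples R)" "table g = table g'"
  shows "g = g'"
proof (rule extensionalityI[OF assms(1,2)])
  fix y :: "nat \<Rightarrow> 'd" assume "y \<in> tuples R"
  then have "y \<in> enc ` {0..<k}"
    using enc_bij by (simp add: bij_betw_def)
  then obtain j where "j < k" "y = enc j"
    by auto
  then show "g y = g' y"
    using fun_cong[OF assms(3), of j] by (simp add: table_def)
qed

lemma weak_poly_free_relation_iff:
  assumes "\<forall>(L, f)\<in>F. is_fun L f"
  shows "weak_poly L f (free_relation F) \<longleftrightarrow> (\<forall>\<pi>\<in>{0..<L} \<rightarrow> {0..<R}. (R, proj L f \<pi> R) \<in> F)"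
  unfolding free_relation_def weak_poly_def prod.case
proof (intro iffI ballI allI impI)
  fix \<pi> assume \<pi>: "\<pi> \<in> {0..<L} \<rightarrow> {0..<R}"
  assume weak_poly: "\<forall>X. (\<forall>i<L. X i \<in> coord ` {0..<R}) \<longrightarrow>
    (\<lambda>j\<in>{0..<k}. f (\<lambda>i\<in>{0..<L}. X i j)) \<in> table ` {g. (R, g) \<in> F}"
  have "\<forall>i<L. coord (\<pi> i) \<in> coord ` {0..<R}"
    using \<pi> by (simp add: Pi_iff)
  then have "(\<lambda>j\<in>{0..<k}. f (\<lambda>i\<in>{0..<L}. coord (\<pi> i) j)) \<in> table ` {g. (R, g) \<in> F}"
    by (rule weak_poly[THEN spec, THEN mp])
  then have "table (proj L f \<pi> R) \<in> table ` {g. (R, g) \<in> F}"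
    by (simp only: apply_coords_eq_table)
  then obtain g where g: "(R, g) \<in> F" "table (proj L f \<pi> R) = table g"
    by (auto elim!: imageE)
  have "g \<in> extensional (tuples R)"
    using bspec[OF assms g(1)] by (simp add: is_fun_def)
  then have "proj L f \<pi> R = g"
    using g(2) by (intro table_inj) (simp_all add: proj_def)
  then show "(R, proj L f \<pi> R) \<in> F"
    using g(1) by simp
next
  fix X assume all_proj: "\<forall>\<pi>\<in>{0..<L} \<rightarrow> {0..<R}. (R, proj L f \<pi> R) \<in> F"
    and X: "\<forall>i<L. X i \<in> coord ` {0..<R}"
  have "\<forall>i\<in>{..<L}. \<exists>i'. i' < R \<and> X i = coord i'"
    using X by (metis atLeastLessThan_iff imageE lessThan_iff)
  from bchoice[OF this] obtain \<pi> where \<pi>: "\<forall>i\<in>{..<L}. \<pi> i < R \<and> X i = coord (\<pi> i)"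
    by blast
  then have "(\<lambda>i\<in>{0..<L}. X i j) = (\<lambda>i\<in>{0..<L}. coord (\<pi> i) j)" for j
    by (intro restrict_ext) simp
  then have "(\<lambda>j\<in>{0..<k}. f (\<lambda>i\<in>{0..<L}. X i j)) = table (proj L f \<pi> R)"
    by (simp only: apply_coords_eq_table)
  moreover have "\<pi> \<in> {0..<L} \<rightarrow> {0..<R}"
    using \<pi> by auto
  then have "(R, proj L f \<pi> R) \<in> F"
    by (rule bspec[OF all_proj])
  ultimately show "(\<lambda>j\<in>{0..<k}. f (\<lambda>i\<in>{0..<L}. X i j)) \<in> table ` {g. (R, g) \<in> F}"
    by simp
qed

lemma promise_rel_free_relation:
  assumes "projection_closed F" "(1, id_fun) \<in> F"
  shows "promise_rel (free_relation F)"
proof -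
  have "coord i \<in> table ` {g. (R, g) \<in> F}" if "i < R" for i
  proof -
    have "(R, proj 1 id_fun (\<lambda>_. i) R) \<in> F"
      using assms that unfolding projection_closed_def by fastforce
    moreover have "coord i = (\<lambda>j\<in>{0..<k}. id_fun (\<lambda>i'\<in>{0..<1}. coord i j))"
      unfolding id_fun_restrict coord_def by (intro restrict_ext) simp
    then have "coord i = table (proj 1 id_fun (\<lambda>_. i) R)"
      using apply_coords_eq_table[where f = id_fun and L = 1 and \<pi> = "\<lambda>_. i"] by (rule trans)
    ultimately show ?thesis
      by blast
  qed
  then show ?thesis
    by (auto simp: promise_rel_def free_relation_def table_def)
qed

lemma poly_free_relation:
  assumes "\<forall>(L, f)\<in>F. is_fun L f"
    and "\<forall>L f. is_fun L f \<longrightarrow> ((L, f) \<in> F \<longleftrightarrow> (\<forall>\<pi>\<in>{0..<L} \<rightarrow> {0..<R}. (R, proj L f \<pi> R) \<in> F))"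
  shows "F = poly {free_relation F}"
proof -
  have "(L, f) \<in> F \<longleftrightarrow> (L, f) \<in> poly {free_relation F}" for L f
  proof (cases "is_fun L f")
    case True
    then show ?thesis
      using assms(2) weak_poly_free_relation_iff[OF assms(1)] by (simp add: poly_def)
  next
    case False
    then show ?thesis
      using assms(1) by (auto simp: poly_def)
  qed
  then show ?thesis
    by (intro set_eqI) (metis surj_pair)
qed

end

lemma tuple_enumeration_exists: "\<exists>k (enc :: nat \<Rightarrow> nat \<Rightarrow> 'd::finite). tuple_enumeration R k enc"
  using ex_bij_betw_nat_finite[OF finite_tuples] unfolding tuple_enumeration_def by blast

theorem theoremE1:
  fixes F :: "(nat \<times> ((nat \<Rightarrow> 'd::finite) \<Rightarrow> 'd)) set"
  assumes "\<forall>(L, f)\<in>F. is_fun L f"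
  shows "(\<exists>\<Gamma>. finite \<Gamma> \<and> (\<forall>R\<in>\<Gamma>. promise_rel R) \<and> F = poly \<Gamma>) \<longleftrightarrow>
         (projection_closed F \<and> finitizable F \<and> (1, id_fun) \<in> F)"
proof
  assume "\<exists>\<Gamma>. finite \<Gamma> \<and> (\<forall>R\<in>\<Gamma>. promise_rel R) \<and> F = poly \<Gamma>"
  then obtain \<Gamma> where \<Gamma>: "finite \<Gamma>" "\<forall>R\<in>\<Gamma>. promise_rel R" "F = poly \<Gamma>"
    by blast
  then show "projection_closed F \<and> finitizable F \<and> (1, id_fun) \<in> F"
    using projection_closed_poly finitizable_poly[OF \<Gamma>(1,2)] id_fun_in_poly[OF \<Gamma>(2)] by simp
next
  assume closed: "projection_closed F \<and> finitizable F \<and> (1, id_fun) \<in> F"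
  then obtain R where R: "\<forall>L f. is_fun L f \<longrightarrow>
      ((L, f) \<in> F \<longleftrightarrow> (\<forall>\<pi>\<in>{0..<L} \<rightarrow> {0..<R}. (R, proj L f \<pi> R) \<in> F))"
    unfolding finitizable_def by blast
  obtain k and enc :: "nat \<Rightarrow> nat \<Rightarrow> 'd" where "tuple_enumeration R k enc"
    using tuple_enumeration_exists by blast
  then interpret tuple_enumeration R k enc .
  have "F = poly {free_relation F}"
    using poly_free_relation[OF assms R] .
  moreover have "promise_rel (free_relation F)"
    using closed by (intro promise_rel_free_relation) auto
  ultimately show "\<exists>\<Gamma>. finite \<Gamma> \<and> (\<forall>R\<in>\<Gamma>. promise_rel R) \<and> F = poly \<Gamma>"
    by (intro exI[of _ "{free_relation F}"]) auto
qed

end
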